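(* For every $k\ge 1$, the bi-hypergraph obtained from $\mathcal H_{2k+1}$ by adding a new vertex $v$, removing the edge $\{v_{1,1},v_{1,2},v_{1,3}\}$, and adding the edges $\{v,v_{2k+1,i},v_{2k+1,i+1}\}$ for $i\in[2]$ and $\{v,v_{1,j},v_{2k+1,j}\}$ for $j\in[3]$ is minimal uncolorable.
   Context: A bi-hypergraph $\mathcal H=(V,E)$ consists of a finite vertex set $V$ and a set $E$ of subsets of $V$, called edges, with no edge contained in another. A mapping $f:V\to\mathbb N$ is a proper coloring of $\mathcal H$ if $1<|f(e)|<|e|$ for every $e\in E$, where $f(e)=\{f(v):v\in e\}$. $\mathcal H$ is colorable if it has a proper coloring, and uncolorable otherwise. A subhypergraph of $\mathcal H$ is a bi-hypergraph $(V',E')$ with $V'\subseteq V$, $E'\subseteq E$; $\mathcal H$ is minimal uncolorable if it is uncolorable but every proper subhypergraph of it is colorable. For $k\ge 2$, $\mathcal H_k$ is the $3$-uniform bi-hypergraph with vertex set $\{v_{i,j}: i\in[k], j\in[3]\}$ (all distinct), with the convention $v_{i,4}=v_{i,1}$, $v_{i,5}=v_{i,2}$, whose edges are the sets $\{v_{i,1},v_{i,2},v_{i,3}\}$ for all $i\in[k]$ and the sets $\{v_{q+1,j},v_{q,j},v_{q,j+t}\}$ for all $q\in[k-1]$, $j\in[3]$, $t\in\{1,2\}$. *)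

theory Defs
  imports Main
begin

definition bihypergraph :: "'a set \<Rightarrow> 'a set set \<Rightarrow> bool" where
  "bihypergraph V E \<longleftrightarrow> finite V \<and> (\<forall>e\<in>E. e \<subseteq> V) \<and>
     (\<forall>e\<in>E. \<forall>e'\<in>E. e \<subseteq> e' \<longrightarrow> e = e')"

definition proper_coloring :: "'a set \<Rightarrow> 'a set set \<Rightarrow> ('a \<Rightarrow> nat) \<Rightarrow> bool" where
  "proper_coloring V E f \<longleftrightarrow> (\<forall>e\<in>E. 1 < card (f ` e) \<and> card (f ` e) < card e)"

definition colorable :: "'a set \<Rightarrow> 'a set set \<Rightarrow> bool" where
  "colorable V E \<longleftrightarrow> (\<exists>f. proper_coloring V E f)"

definition subhypergraph :: "'a set \<Rightarrow> 'a set set \<Rightarrow> 'a set \<Rightarrow> 'a set set \<Rightarrow> bool" where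
  "subhypergraph V' E' V E \<longleftrightarrow> bihypergraph V' E' \<and> V' \<subseteq> V \<and> E' \<subseteq> E"

definition minimal_uncolorable :: "'a set \<Rightarrow> 'a set set \<Rightarrow> bool" where
  "minimal_uncolorable V E \<longleftrightarrow> bihypergraph V E \<and> \<not> colorable V E \<and>
     (\<forall>V' E'. subhypergraph V' E' V E \<and> (V', E') \<noteq> (V, E) \<longrightarrow> colorable V' E')"

text \<open>Vertices: Vx i j stands for v_{i,j}; Vnew is the additional vertex v.\<close>
datatype vert = Vx nat nat | Vnew

text \<open>Cyclic index convention v_{i,4} = v_{i,1}, v_{i,5} = v_{i,2}.\<close>
definition cyc :: "nat \<Rightarrow> nat" where
  "cyc j = (j - 1) mod 3 + 1"

definition H_verts :: "nat \<Rightarrow> vert set" where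
  "H_verts k = {Vx i j | i j. i \<in> {1..k} \<and> j \<in> {1..3}}"

definition H_edges :: "nat \<Rightarrow> vert set set" where
  "H_edges k =
     {{Vx i 1, Vx i 2, Vx i 3} | i. i \<in> {1..k}} \<union>
     {{Vx (q+1) j, Vx q j, Vx q (cyc (j + t))} | q j t.
        q \<in> {1..k-1} \<and> j \<in> {1..3} \<and> t \<in> {1,2}}"

definition G_verts :: "nat \<Rightarrow> vert set" where
  "G_verts k = insert Vnew (H_verts (2*k+1))"

definition G_edges :: "nat \<Rightarrow> vert set set" where
  "G_edges k =
     (H_edges (2*k+1) - {{Vx 1 1, Vx 1 2, Vx 1 3}}) \<union>
     {{Vnew, Vx (2*k+1) i, Vx (2*k+1) (i+1)} | i. i \<in> {1,2}} \<union>
     {{Vnew, Vx 1 j, Vx (2*k+1) j} | j. j \<in> {1..3}}"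

end

theory Submission
  imports Defs
begin

text \<open>
  A proper colouring gives every 3-edge exactly two colours. Read the colours of
  v_{q,1}, v_{q,2}, v_{q,3} as row q. The step edges between rows q and q+1 force a
  two-coloured row to be followed by its colour swap, a rainbow row by itself, and a
  monochromatic row by a row avoiding its colour. Rows 2, ..., 2k+1 keep their edges and are
  two-coloured, so row 1 is not rainbow. If row 1 is two-coloured, the top row 2k+1 equals it
  after an even number of swaps; the wrap edges then force a third colour on v, and one cap
  edge becomes rainbow. If row 1 is monochromatic of colour x, the top row avoids x, and the
  cap edges (if v has colour x) or the wrap edges (otherwise) force the top row to be
  monochromatic. Conversely, once any single edge is deleted, a colouring by alternating rows
  can be adjusted near the deleted edge.
\<close>

lemma colorable_antimono: "colorable V E \<Longrightarrow> E' \<subseteq> E \<Longrightarrow> colorable V' E'"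
  unfolding colorable_def proper_coloring_def by blast

lemma bihypergraph_uniformI:
  assumes "finite V" "\<And>e. e \<in> E \<Longrightarrow> e \<subseteq> V" "\<And>e. e \<in> E \<Longrightarrow> finite e \<and> card e = r"
  shows "bihypergraph V E"
  unfolding bihypergraph_def
proof (intro conjI ballI impI assms(1,2))
  fix e e' assume "e \<in> E" "e' \<in> E" "e \<subseteq> e'"
  with assms(3) show "e = e'" by (metis card_subset_eq)
qed

lemma minimal_uncolorableI:
  assumes "bihypergraph V E" "\<not> colorable V E"
    and covered: "\<And>u. u \<in> V \<Longrightarrow> \<exists>e\<in>E. u \<in> e"
    and critical: "\<And>e. e \<in> E \<Longrightarrow> colorable V (E - {e})"
  shows "minimal_uncolorable V E"
  unfolding minimal_uncolorable_def
proof (intro conjI allI impI assms(1,2))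
  fix V' E' assume "subhypergraph V' E' V E \<and> (V', E') \<noteq> (V, E)"
  then have sub: "bihypergraph V' E'" "V' \<subseteq> V" "E' \<subseteq> E" and proper: "(V', E') \<noteq> (V, E)"
    unfolding subhypergraph_def by auto
  show "colorable V' E'"
  proof (cases "E' = E")
    case True
    have "V \<subseteq> V'"
    proof
      fix u assume "u \<in> V"
      then obtain e where "e \<in> E'" "u \<in> e" using covered True by blast
      with sub(1) show "u \<in> V'" unfolding bihypergraph_def by blast
    qed
    with sub(2) proper True show ?thesis by simp
  next
    case False
    with sub(3) obtain e where "e \<in> E" "E' \<subseteq> E - {e}" by blast
    then show ?thesis using critical colorable_antimono by blast
  qed
qed

definition two_coloured :: "nat \<Rightarrow> nat \<Rightarrow> nat \<Rightarrow> bool" where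
  "two_coloured a b c \<longleftrightarrow> (a = b \<and> b \<noteq> c) \<or> (a = c \<and> a \<noteq> b) \<or> (b = c \<and> a \<noteq> b)"

lemma two_coloured_same_right [simp]: "two_coloured a b b \<longleftrightarrow> a \<noteq> b"
  by (auto simp: two_coloured_def)

lemma two_coloured_trichotomy:
  "two_coloured a b c \<or> (b = a \<and> c = a) \<or> (a \<noteq> b \<and> a \<noteq> c \<and> b \<noteq> c)"
  by (auto simp: two_coloured_def)

lemma two_coloured_distinct: "b \<noteq> c \<Longrightarrow> two_coloured a b c \<longleftrightarrow> a = b \<or> a = c"
  by (auto simp: two_coloured_def)

lemma cyc_simps [simp]: "cyc 2 = 2" "cyc 3 = 3" "cyc 4 = 1" "cyc 5 = 2"
  \<comment> \<open>the simplifier produces these forms from \<open>1 + 1\<close> and \<open>1 + 2\<close>\<close>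
  "cyc (Suc (Suc 0)) = 2" "cyc (Suc (Suc (Suc 0))) = 3"
  by (simp_all add: cyc_def)

lemma cyc_other_column: "j \<in> {1,2,3} \<Longrightarrow> t \<in> {1,2} \<Longrightarrow> cyc (j + t) \<noteq> j \<and> cyc (j + t) \<in> {1,2,3}"
  by (elim insertE) simp_all

lemma third_column: "j \<in> {1,2,3} \<Longrightarrow> t \<in> {1,2} \<Longrightarrow> \<exists>c\<in>{1,2,3}. c \<noteq> j \<and> c \<noteq> cyc (j + t)"
  by (elim insertE) simp_all

text \<open>
  Column c of row q gets colour y in odd rows and x in even rows, the other two columns the
  other colour; consecutive rows thus swap x and y.
\<close>
definition alternating :: "nat \<Rightarrow> nat \<Rightarrow> nat \<Rightarrow> nat \<Rightarrow> nat \<Rightarrow> nat" where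
  "alternating c x y q j = (if (j = c) = odd q then y else x)"

lemma alternating_odd: "odd q \<Longrightarrow> alternating c x y q j = (if j = c then y else x)"
  by (simp add: alternating_def)

lemma alternating_two_coloured:
  "x \<noteq> y \<Longrightarrow> c \<in> {1,2,3} \<Longrightarrow>
    two_coloured (alternating c x y q 1) (alternating c x y q 2) (alternating c x y q 3)"
  by (auto simp: alternating_def two_coloured_def)

lemma alternating_step:
  "x \<noteq> y \<Longrightarrow> j \<in> {1,2,3} \<Longrightarrow> t \<in> {1,2} \<Longrightarrow>
    two_coloured (alternating c x y (Suc q) j) (alternating c x y q j) (alternating c x y q (cyc (j + t)))"
  by (auto simp: alternating_def two_coloured_def)

lemma two_coloured_alternating:
  assumes "two_coloured (a 1) (a 2) (a 3)"
  shows "\<exists>c x y. x \<noteq> y \<and> c \<in> {1,2,3} \<and> (\<forall>j\<in>{1,2,3}. a j = alternating c x y q j)"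
proof -
  have "\<exists>c x y. x \<noteq> y \<and> c \<in> {1,2,3} \<and> (\<forall>j\<in>{1,2,3}. a j = (if j = c then y else x))"
    using assms unfolding two_coloured_def
  proof (elim disjE conjE)
    assume "a 1 = a 2" "a 2 \<noteq> a 3"
    then show ?thesis by (intro exI[of _ 3] exI[of _ "a 1"] exI[of _ "a 3"]) auto
  next
    assume "a 1 = a 3" "a 1 \<noteq> a 2"
    then show ?thesis by (intro exI[of _ 2] exI[of _ "a 1"] exI[of _ "a 2"]) auto
  next
    assume "a 2 = a 3" "a 1 \<noteq> a 2"
    then show ?thesis by (intro exI[of _ 1] exI[of _ "a 2"] exI[of _ "a 1"]) auto
  qed
  then obtain c x y where row: "x \<noteq> y" "c \<in> {1,2,3}" "\<forall>j\<in>{1,2,3}. a j = (if j = c then y else x)"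
    by blast
  then show ?thesis
  proof (cases "odd q")
    case True
    with row show ?thesis by (intro exI[of _ c] exI[of _ x] exI[of _ y]) (simp add: alternating_def)
  next
    case False
    with row show ?thesis by (intro exI[of _ c] exI[of _ y] exI[of _ x]) (simp add: alternating_def)
  qed
qed

definition row_edge :: "nat \<Rightarrow> vert set" where
  "row_edge i = {Vx i 1, Vx i 2, Vx i 3}"

definition step_edge :: "nat \<Rightarrow> nat \<Rightarrow> nat \<Rightarrow> vert set" where
  "step_edge q j t = {Vx (q + 1) j, Vx q j, Vx q (cyc (j + t))}"

definition cap_edge :: "nat \<Rightarrow> nat \<Rightarrow> vert set" where
  "cap_edge n i = {Vnew, Vx n i, Vx n (i + 1)}"

definition wrap_edge :: "nat \<Rightarrow> nat \<Rightarrow> vert set" where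
  "wrap_edge n j = {Vnew, Vx 1 j, Vx n j}"

lemma row_edge_eq_iff: "row_edge i = row_edge i' \<longleftrightarrow> i = i'"
proof
  assume "row_edge i = row_edge i'"
  then have "Vx i 1 \<in> row_edge i'" by (metis insertI1 row_edge_def)
  then show "i = i'" by (simp add: row_edge_def)
qed simp

lemma row_edge_neq_step_edge: "row_edge i \<noteq> step_edge q j t"
proof
  assume "row_edge i = step_edge q j t"
  then have "Vx (q + 1) j \<in> row_edge i" "Vx q j \<in> row_edge i"
    by (metis insertI1 insertI2 step_edge_def)+
  then show False by (auto simp: row_edge_def)
qed

lemma G_edges_eq:
  "G_edges k = row_edge ` {2..2*k+1} \<union>
    (\<lambda>(q, j, t). step_edge q j t) ` ({1..2*k} \<times> {1,2,3} \<times> {1,2}) \<union>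
    cap_edge (2*k+1) ` {1,2} \<union> wrap_edge (2*k+1) ` {1,2,3}"
proof -
  have steps: "{f q j t | q j t. q \<in> A \<and> j \<in> B \<and> t \<in> C} = (\<lambda>(q, j, t). f q j t) ` (A \<times> B \<times> C)"
    for f :: "nat \<Rightarrow> nat \<Rightarrow> nat \<Rightarrow> vert set" and A B C
    by auto
  have "{1..3::nat} = {1,2,3}" "2*k+1-1 = 2*k" by auto
  then have "G_edges k =
      (row_edge ` {1..2*k+1} \<union> (\<lambda>(q, j, t). step_edge q j t) ` ({1..2*k} \<times> {1,2,3} \<times> {1,2})) - {row_edge 1} \<union>
      cap_edge (2*k+1) ` {1,2} \<union> wrap_edge (2*k+1) ` {1,2,3}"
    unfolding G_edges_def H_edges_def row_edge_def[symmetric] step_edge_def[symmetric]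
      cap_edge_def[symmetric] wrap_edge_def[symmetric]
    by (simp only: Setcompr_eq_image steps)
  moreover have "row_edge ` {1..2*k+1} - {row_edge 1} = row_edge ` {2..2*k+1}"
  proof -
    have "inj row_edge" by (simp add: inj_def row_edge_eq_iff)
    then have "row_edge ` {1..2*k+1} - row_edge ` {1} = row_edge ` ({1..2*k+1} - {1})"
      by (simp add: image_set_diff)
    moreover have "{1..2*k+1} - {1} = {2..2*k+1}" by auto
    ultimately show ?thesis by simp
  qed
  moreover have no_row: "row_edge 1 \<notin> (\<lambda>(q, j, t). step_edge q j t) ` ({1..2*k} \<times> {1,2,3} \<times> {1,2})"
    by (simp add: image_iff row_edge_neq_step_edge)
  ultimately show ?thesis by (simp only: Un_Diff Diff_insert0[OF no_row] Diff_empty)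
qed

lemma G_edgesE:
  assumes "e \<in> G_edges k"
  obtains (row) i where "i \<in> {2..2*k+1}" "e = row_edge i"
  | (step) q j t where "q \<in> {1..2*k}" "j \<in> {1,2,3}" "t \<in> {1,2}" "e = step_edge q j t"
  | (cap) i where "i \<in> {1,2}" "e = cap_edge (2*k+1) i"
  | (wrap) j where "j \<in> {1,2,3}" "e = wrap_edge (2*k+1) j"
  using assms unfolding G_edges_eq by blast

definition properly_coloured :: "('a \<Rightarrow> nat) \<Rightarrow> 'a set \<Rightarrow> bool" where
  "properly_coloured f e \<longleftrightarrow> 1 < card (f ` e) \<and> card (f ` e) < card e"

lemma proper_coloring_iff: "proper_coloring V E f \<longleftrightarrow> (\<forall>e\<in>E. properly_coloured f e)"
  by (simp add: proper_coloring_def properly_coloured_def)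

lemma properly_coloured_triple:
  "a \<noteq> b \<Longrightarrow> a \<noteq> c \<Longrightarrow> b \<noteq> c \<Longrightarrow>
    properly_coloured f {a, b, c} \<longleftrightarrow> two_coloured (f a) (f b) (f c)"
  by (auto simp: properly_coloured_def two_coloured_def card_insert_if)

definition grid_colouring :: "(nat \<Rightarrow> nat \<Rightarrow> nat) \<Rightarrow> nat \<Rightarrow> vert \<Rightarrow> nat" where
  "grid_colouring R a u = (case u of Vx q j \<Rightarrow> R q j | Vnew \<Rightarrow> a)"

lemma grid_colouring_simps [simp]: "grid_colouring R a (Vx q j) = R q j" "grid_colouring R a Vnew = a"
  by (simp_all add: grid_colouring_def)

lemma grid_colouring_eta: "f = grid_colouring (\<lambda>q j. f (Vx q j)) (f Vnew)"
  by (rule ext) (simp add: grid_colouring_def split: vert.split)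

lemma proper_coloring_G_edges_minus_iff:
  assumes "k \<ge> 1"
  shows "proper_coloring V (G_edges k - X) (grid_colouring R a) \<longleftrightarrow>
    (\<forall>i\<in>{2..2*k+1}. row_edge i \<notin> X \<longrightarrow> two_coloured (R i 1) (R i 2) (R i 3)) \<and>
    (\<forall>q\<in>{1..2*k}. \<forall>j\<in>{1,2,3}. \<forall>t\<in>{1,2}. step_edge q j t \<notin> X \<longrightarrow>
       two_coloured (R (q + 1) j) (R q j) (R q (cyc (j + t)))) \<and>
    (cap_edge (2*k+1) 1 \<notin> X \<longrightarrow> two_coloured a (R (2*k+1) 1) (R (2*k+1) 2)) \<and>
    (cap_edge (2*k+1) 2 \<notin> X \<longrightarrow> two_coloured a (R (2*k+1) 2) (R (2*k+1) 3)) \<and>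
    (\<forall>j\<in>{1,2,3}. wrap_edge (2*k+1) j \<notin> X \<longrightarrow> two_coloured a (R 1 j) (R (2*k+1) j))"
  (is "_ \<longleftrightarrow> ?rhs")
proof -
  have row: "properly_coloured (grid_colouring R a) (row_edge i) \<longleftrightarrow> two_coloured (R i 1) (R i 2) (R i 3)" for i
    unfolding row_edge_def by (subst properly_coloured_triple) simp_all
  have step: "properly_coloured (grid_colouring R a) (step_edge q j t) \<longleftrightarrow>
      two_coloured (R (q + 1) j) (R q j) (R q (cyc (j + t)))" if "j \<in> {1,2,3}" "t \<in> {1,2}" for q j t
    using cyc_other_column[OF that] unfolding step_edge_def by (subst properly_coloured_triple) auto
  have cap: "properly_coloured (grid_colouring R a) (cap_edge n i) \<longleftrightarrow>
      two_coloured a (R n i) (R n (i + 1))" for n i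
    unfolding cap_edge_def by (subst properly_coloured_triple) simp_all
  have wrap: "properly_coloured (grid_colouring R a) (wrap_edge (2*k+1) j) \<longleftrightarrow>
      two_coloured a (R 1 j) (R (2*k+1) j)" for j
    using assms unfolding wrap_edge_def by (subst properly_coloured_triple) simp_all
  have "proper_coloring V (G_edges k - X) (grid_colouring R a) \<longleftrightarrow>
      (\<forall>e\<in>G_edges k. e \<notin> X \<longrightarrow> properly_coloured (grid_colouring R a) e)"
    by (auto simp: proper_coloring_iff)
  also have "\<dots> \<longleftrightarrow> ?rhs"
    unfolding G_edges_eq by (simp add: ball_Un row step cap wrap del: One_nat_def) (simp only: conj_ac)
  finally show ?thesis .
qed

definition compatible_rows :: "(nat \<Rightarrow> nat) \<Rightarrow> (nat \<Rightarrow> nat) \<Rightarrow> bool" where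
  "compatible_rows a b \<longleftrightarrow> (\<forall>j\<in>{1,2,3}. \<forall>t\<in>{1,2}. two_coloured (b j) (a j) (a (cyc (j + t))))"

lemma compatible_rows_iff:
  "compatible_rows a b \<longleftrightarrow>
    two_coloured (b 1) (a 1) (a 2) \<and> two_coloured (b 1) (a 1) (a 3) \<and>
    two_coloured (b 2) (a 2) (a 3) \<and> two_coloured (b 2) (a 2) (a 1) \<and>
    two_coloured (b 3) (a 3) (a 1) \<and> two_coloured (b 3) (a 3) (a 2)"
  by (simp add: compatible_rows_def)

lemma compatible_rows_alternating:
  assumes "x \<noteq> y" "c \<in> {1,2,3}" and a: "\<forall>j\<in>{1,2,3}. a j = alternating c x y q j"
    and "compatible_rows a b" "two_coloured (b 1) (b 2) (b 3)"
  shows "\<forall>j\<in>{1,2,3}. b j = alternating c x y (Suc q) j"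
proof -
  from a have "a 1 = alternating c x y q 1" "a 2 = alternating c x y q 2" "a 3 = alternating c x y q 3"
    by simp_all
  with assms show ?thesis
    unfolding compatible_rows_iff
    by (cases "odd q"; elim insertE; simp add: alternating_def two_coloured_distinct; auto)
qed

lemma compatible_rows_propagate_alternating:
  assumes "x \<noteq> y" "c \<in> {1,2,3}" "q0 \<le> q"
    and start: "\<forall>j\<in>{1,2,3}. R q0 j = alternating c x y q0 j"
    and steps: "\<And>p. q0 \<le> p \<Longrightarrow> p < q \<Longrightarrow>
      compatible_rows (R p) (R (Suc p)) \<and> two_coloured (R (Suc p) 1) (R (Suc p) 2) (R (Suc p) 3)"
  shows "\<forall>j\<in>{1,2,3}. R q j = alternating c x y q j"
  using \<open>q0 \<le> q\<close> steps
proof (induction q rule: dec_induct)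
  case base
  show ?case by (rule start)
next
  case (step p)
  then show ?case using compatible_rows_alternating[OF assms(1,2)] by simp
qed

lemma compatible_rows_rainbow:
  assumes "compatible_rows a b" "a 1 \<noteq> a 2" "a 1 \<noteq> a 3" "a 2 \<noteq> a 3"
  shows "\<not> two_coloured (b 1) (b 2) (b 3)"
proof -
  from assms have "b 1 = a 1" "b 2 = a 2" "b 3 = a 3"
    unfolding compatible_rows_iff by (auto simp: two_coloured_distinct)
  with assms(2-4) show ?thesis by (simp add: two_coloured_def)
qed

lemma compatible_rows_constant:
  assumes "compatible_rows a b" "a 1 = x" "a 2 = x" "a 3 = x"
  shows "b 1 \<noteq> x" "b 2 \<noteq> x" "b 3 \<noteq> x"
  using assms unfolding compatible_rows_iff by auto

lemma compatible_rows_top_row: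
  assumes "odd n" "q0 \<le> n" and two: "two_coloured (R q0 1) (R q0 2) (R q0 3)"
    and chain: "\<And>p. q0 \<le> p \<Longrightarrow> p < n \<Longrightarrow>
      compatible_rows (R p) (R (Suc p)) \<and> two_coloured (R (Suc p) 1) (R (Suc p) 2) (R (Suc p) 3)"
  shows "\<exists>c x y. x \<noteq> y \<and> c \<in> {1,2,3} \<and>
    (\<forall>j\<in>{1,2,3}. R q0 j = alternating c x y q0 j) \<and> (\<forall>j\<in>{1,2,3}. R n j = (if j = c then y else x))"
proof -
  obtain c x y where xy: "x \<noteq> y" "c \<in> {1,2,3}" and start: "\<forall>j\<in>{1,2,3}. R q0 j = alternating c x y q0 j"
    using two_coloured_alternating[OF two] by blast
  have "\<forall>j\<in>{1,2,3}. R n j = alternating c x y n j"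
    using compatible_rows_propagate_alternating[where R = R, OF xy \<open>q0 \<le> n\<close> start chain] .
  with xy start \<open>odd n\<close> show ?thesis by (auto simp: alternating_odd)
qed

lemma apex_forces_constant_row:
  assumes "b 1 \<noteq> x" "b 2 \<noteq> x" "b 3 \<noteq> x"
    and "two_coloured a (b 1) (b 2)" "two_coloured a (b 2) (b 3)"
    and "\<And>j. j \<in> {1,2,3} \<Longrightarrow> two_coloured a x (b j)"
  shows "b 1 = b 2 \<and> b 2 = b 3"
proof (cases "a = x")
  case True
  with assms(1-5) show ?thesis by (auto simp: two_coloured_def)
next
  case False
  with assms(1-3) assms(6)[of 1] assms(6)[of 2] assms(6)[of 3] show ?thesis
    by (auto simp: two_coloured_def)
qed

lemma odd_grid_not_properly_colourable:
  assumes n: "2 \<le> n" "odd n"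
    and rows: "\<And>i. 2 \<le> i \<Longrightarrow> i \<le> n \<Longrightarrow> two_coloured (R i 1) (R i 2) (R i 3)"
    and compat: "\<And>q. 1 \<le> q \<Longrightarrow> q < n \<Longrightarrow> compatible_rows (R q) (R (Suc q))"
    and caps: "two_coloured a (R n 1) (R n 2)" "two_coloured a (R n 2) (R n 3)"
    and wraps: "\<And>j. j \<in> {1,2,3} \<Longrightarrow> two_coloured a (R 1 j) (R n j)"
  shows False
proof -
  have top_row: "\<exists>c x y. x \<noteq> y \<and> c \<in> {1,2,3} \<and>
      (\<forall>j\<in>{1,2,3}. R q0 j = alternating c x y q0 j) \<and> (\<forall>j\<in>{1,2,3}. R n j = (if j = c then y else x))"
    if "1 \<le> q0" "q0 \<le> n" "two_coloured (R q0 1) (R q0 2) (R q0 3)" for q0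
    using that n compat rows by (intro compatible_rows_top_row) auto
  consider (bichromatic) "two_coloured (R 1 1) (R 1 2) (R 1 3)"
    | (monochromatic) "R 1 2 = R 1 1" "R 1 3 = R 1 1"
    | (rainbow) "R 1 1 \<noteq> R 1 2" "R 1 1 \<noteq> R 1 3" "R 1 2 \<noteq> R 1 3"
    using two_coloured_trichotomy[of "R 1 1" "R 1 2" "R 1 3"] by blast
  then show False
  proof cases
    case bichromatic
    then obtain c x y where xy: "x \<noteq> y" "c \<in> {1,2,3}"
      and row1: "\<forall>j\<in>{1,2,3}. R 1 j = alternating c x y 1 j"
      and top: "\<forall>j\<in>{1,2,3}. R n j = (if j = c then y else x)"
      using top_row[of 1] n by auto
    have "R 1 j = R n j" if "j \<in> {1,2,3}" for j using row1 top that by (auto simp: alternating_odd)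
    then have "a \<noteq> R n j" if "j \<in> {1,2,3}" for j using wraps[OF that] that by simp
    then have "a \<noteq> R n 1" "a \<noteq> R n 2" "a \<noteq> R n 3" by simp_all
    with caps xy top show False by (auto simp: two_coloured_def)
  next
    case monochromatic
    define x where "x = R 1 1"
    have row2: "R 2 1 \<noteq> x" "R 2 2 \<noteq> x" "R 2 3 \<noteq> x"
      using compatible_rows_constant[OF compat[of 1]] monochromatic n by (simp_all add: x_def numeral_2_eq_2)
    obtain c x2 y2 where "\<forall>j\<in>{1,2,3}. R 2 j = alternating c x2 y2 2 j"
      and "\<forall>j\<in>{1,2,3}. R n j = (if j = c then y2 else x2)" and "c \<in> {1,2,3}"
      using top_row[of 2] rows[of 2] n by auto
    with row2 have top: "R n 1 \<noteq> x" "R n 2 \<noteq> x" "R n 3 \<noteq> x"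
      by (auto simp: alternating_def)
    have "two_coloured a x (R n j)" if "j \<in> {1,2,3}" for j
      using wraps[OF that] monochromatic that by (auto simp: x_def)
    then have "R n 1 = R n 2 \<and> R n 2 = R n 3"
      by (rule apex_forces_constant_row[where b = "R n", OF top caps])
    with rows[of n] n show False by (simp add: two_coloured_def)
  next
    case rainbow
    with compatible_rows_rainbow[OF compat[of 1]] rows[of 2] n show False by (simp add: numeral_2_eq_2)
  qed
qed

lemma not_colorable_G_edges:
  assumes "k \<ge> 1"
  shows "\<not> colorable V (G_edges k)"
proof
  assume "colorable V (G_edges k)"
  then obtain R a where "proper_coloring V (G_edges k - {}) (grid_colouring R a)"
    unfolding colorable_def using grid_colouring_eta by (metis Diff_empty)
  note proper = this[unfolded proper_coloring_G_edges_minus_iff[OF assms]]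
  show False
  proof (rule odd_grid_not_properly_colourable)
    show "2 \<le> 2*k+1" "odd (2*k+1)" using assms by simp_all
    show "compatible_rows (R q) (R (Suc q))" if "1 \<le> q" "q < 2*k+1" for q
      using proper that unfolding compatible_rows_def by simp
  qed (use proper in auto)
qed

lemma colorable_G_edges_minus_alternating:
  fixes a c :: nat
  defines "r j \<equiv> if j = c then 1 else 0"
  assumes k: "k \<ge> 1" and c: "c \<in> {1,2,3}"
    and cap1: "cap_edge (2*k+1) 1 \<notin> X \<Longrightarrow> two_coloured a (r 1) (r 2)"
    and cap2: "cap_edge (2*k+1) 2 \<notin> X \<Longrightarrow> two_coloured a (r 2) (r 3)"
    and wrap: "\<And>j. j \<in> {1,2,3} \<Longrightarrow> wrap_edge (2*k+1) j \<notin> X \<Longrightarrow> a \<noteq> r j"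
  shows "colorable V (G_edges k - X)"
proof -
  have "alternating c 0 1 q j = r j" if "odd q" for q j
    using that by (simp add: alternating_odd r_def)
  then have odd_rows: "alternating c 0 1 1 j = r j" "alternating c 0 1 (2*k+1) j = r j" for j
    by simp_all
  have "proper_coloring V (G_edges k - X) (grid_colouring (alternating c 0 1) a)"
    unfolding proper_coloring_G_edges_minus_iff[OF k] odd_rows
    using alternating_two_coloured[OF _ c] alternating_step cap1 cap2 wrap
    by simp
  then show ?thesis unfolding colorable_def by blast
qed

lemma colorable_G_edges_minus_cap_edge:
  assumes "k \<ge> 1" "i \<in> {1,2}"
  shows "colorable V (G_edges k - {cap_edge (2*k+1) i})"
proof (cases "i = 1")
  case True
  then show ?thesis
    by (intro colorable_G_edges_minus_alternating[where c = 1 and a = 2] assms(1)) auto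
next
  case False
  with assms(2) show ?thesis
    by (intro colorable_G_edges_minus_alternating[where c = 3 and a = 2] assms(1)) auto
qed

lemma colorable_G_edges_minus_wrap_edge:
  assumes "k \<ge> 1" "j \<in> {1,2,3}"
  shows "colorable V (G_edges k - {wrap_edge (2*k+1) j})"
  using assms
  by (intro colorable_G_edges_minus_alternating[where c = j and a = 1] assms(1))
    (auto simp: two_coloured_def)

lemma alternating_switch_step:
  assumes "x \<noteq> y" "j \<in> {1,2,3}" "t \<in> {1,2}" "c \<noteq> j0" "c \<noteq> cyc (j0 + t0)" "(j, t) \<noteq> (j0, t0)"
    "j0 \<in> {1,2,3}" "t0 \<in> {1,2}" "c \<in> {1,2,3}"
  shows "two_coloured (alternating j0 x y (Suc q) j) (alternating c x y q j) (alternating c x y q (cyc (j + t)))"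
  using assms by (cases "odd q"; auto simp: alternating_def two_coloured_distinct)

lemma colorable_G_edges_minus_step_edge:
  assumes k: "k \<ge> 1" and q0: "q0 \<in> {1..2*k}" and j0: "j0 \<in> {1,2,3}" and t0: "t0 \<in> {1,2}"
  shows "colorable V (G_edges k - {step_edge q0 j0 t0})"
proof -
  obtain c where c: "c \<in> {1,2,3}" "c \<noteq> j0" "c \<noteq> cyc (j0 + t0)"
    using third_column[OF j0 t0] by blast
  \<comment> \<open>The odd column switches from c to j0 above row q0; since c avoids both lower columns of
    the deleted edge, the switch violates that edge only.\<close>
  define R where "R q = (if q \<le> q0 then alternating c 0 1 q else alternating j0 0 1 q)" for q
  have top: "R (2*k+1) j = (if j = j0 then 1 else 0)" for j
    using q0 by (simp add: R_def alternating_odd)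
  have bottom: "R 1 j = (if j = c then 1 else 0)" for j
    using q0 by (simp add: R_def alternating_odd)
  have "proper_coloring V (G_edges k - {step_edge q0 j0 t0}) (grid_colouring R 1)"
    unfolding proper_coloring_G_edges_minus_iff[OF k] top bottom
  proof (intro conjI ballI impI)
    fix i assume "i \<in> {2..2*k+1}"
    show "two_coloured (R i 1) (R i 2) (R i 3)"
      using alternating_two_coloured c(1) j0 by (simp add: R_def)
  next
    fix q j t assume "q \<in> {1..2*k}" "j \<in> {1,2,3}" "t \<in> {1,2}"
      and "step_edge q j t \<notin> {step_edge q0 j0 t0}"
    moreover from this have "q = q0 \<Longrightarrow> (j, t) \<noteq> (j0, t0)" by auto
    ultimately show "two_coloured (R (q + 1) j) (R q j) (R q (cyc (j + t)))"
      using alternating_step alternating_switch_step[OF _ _ _ c(2,3) _ j0 t0 c(1)]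
      by (auto simp: R_def)
  qed (use j0 c in \<open>auto simp: two_coloured_def\<close>)
  then show ?thesis unfolding colorable_def by blast
qed

lemma alternating_collapse_step:
  "x \<noteq> y \<Longrightarrow> j \<in> {1,2,3} \<Longrightarrow> t \<in> {1,2} \<Longrightarrow>
    two_coloured (alternating 1 x y (Suc q) 2) (alternating 1 x y q j) (alternating 1 x y q (cyc (j + t)))"
  by (cases "odd q"; auto simp: alternating_def two_coloured_def)

lemma colorable_G_edges_minus_row_edge:
  assumes k: "k \<ge> 1" and i0: "i0 \<in> {2..2*k+1}"
  shows "colorable V (G_edges k - {row_edge i0})"
proof -
  \<comment> \<open>Row 1 is constant 0, rows below i0 alternate in 1, 2, row i0 is constant in the colour
    its last two columns would get, and rows above alternate in 0, 3.\<close>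
  define m where "m = alternating 1 1 2 i0 2"
  define R where "R q j =
    (if q = 1 then 0 else if q < i0 then alternating 1 1 2 q j else if q = i0 then m else alternating 1 0 3 q j)"
    for q j
  define a :: nat where "a = (if i0 = 2*k+1 then 0 else 3)"
  have m: "m \<in> {1,2}" by (simp add: m_def alternating_def)
  have "proper_coloring V (G_edges k - {row_edge i0}) (grid_colouring R a)"
    unfolding proper_coloring_G_edges_minus_iff[OF k]
  proof (intro conjI ballI impI)
    fix i assume "i \<in> {2..2*k+1}" "row_edge i \<notin> {row_edge i0}"
    then show "two_coloured (R i 1) (R i 2) (R i 3)"
      using alternating_two_coloured[of 1 2 1 i] alternating_two_coloured[of 0 3 1 i] by (auto simp: R_def)
  next
    fix q j t :: nat assume q: "q \<in> {1..2*k}" and jt: "j \<in> {1,2,3}" "t \<in> {1,2}"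
    consider "q = 1" | "1 < q" "q + 1 < i0" | "1 < q" "q + 1 = i0" | "1 < q" "q = i0" | "1 < q" "i0 < q"
      using q by atomize_elim auto
    then show "two_coloured (R (q + 1) j) (R q j) (R q (cyc (j + t)))"
    proof cases
      case 1
      with m i0 show ?thesis by (auto simp: R_def alternating_def)
    next
      case 2
      with alternating_step[of 1 2 j t 1 q] jt show ?thesis by (simp add: R_def)
    next
      case 3
      with alternating_collapse_step[of 1 2 j t q] jt show ?thesis by (auto simp: R_def m_def)
    next
      case 4
      with m show ?thesis by (auto simp: R_def alternating_def)
    next
      case 5
      with alternating_step[of 0 3 j t 1 q] jt show ?thesis by (simp add: R_def)
    qed
  qed (use i0 m in \<open>auto simp: R_def a_def alternating_def two_coloured_def\<close>)
  then show ?thesis unfolding colorable_def by blast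
qed

lemma colorable_G_edges_minus:
  assumes "k \<ge> 1" "e \<in> G_edges k"
  shows "colorable V (G_edges k - {e})"
  using assms(2)
proof (cases rule: G_edgesE)
  case row
  then show ?thesis using colorable_G_edges_minus_row_edge[OF assms(1) row(1)] by simp
next
  case step
  then show ?thesis using colorable_G_edges_minus_step_edge[OF assms(1) step(1-3)] by simp
next
  case cap
  then show ?thesis using colorable_G_edges_minus_cap_edge[OF assms(1) cap(1)] by simp
next
  case wrap
  then show ?thesis using colorable_G_edges_minus_wrap_edge[OF assms(1) wrap(1)] by simp
qed

lemma finite_G_verts: "finite (G_verts k)"
proof -
  have "H_verts (2*k+1) \<subseteq> (\<lambda>(i, j). Vx i j) ` ({1..2*k+1} \<times> {1..3})"
    unfolding H_verts_def by auto
  then show ?thesis unfolding G_verts_def by (simp add: finite_subset)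
qed

lemma Vx_mem_G_verts: "i \<in> {1..2*k+1} \<Longrightarrow> j \<in> {1,2,3} \<Longrightarrow> Vx i j \<in> G_verts k"
  unfolding G_verts_def H_verts_def by auto

lemma G_edge_subset_G_verts:
  assumes "e \<in> G_edges k"
  shows "e \<subseteq> G_verts k"
  using assms
proof (cases rule: G_edgesE)
  case step
  then show ?thesis
    using cyc_other_column Vx_mem_G_verts by (auto simp: step_edge_def)
qed (auto simp: row_edge_def cap_edge_def wrap_edge_def G_verts_def H_verts_def)

lemma card_G_edge:
  assumes "k \<ge> 1" "e \<in> G_edges k"
  shows "finite e \<and> card e = 3"
  using assms(2)
proof (cases rule: G_edgesE)
  case step
  then show ?thesis using cyc_other_column by (auto simp: step_edge_def)
qed (use assms(1) in \<open>auto simp: row_edge_def cap_edge_def wrap_edge_def\<close>)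

lemma G_verts_covered:
  assumes "k \<ge> 1" "u \<in> G_verts k"
  shows "\<exists>e\<in>G_edges k. u \<in> e"
proof (cases u)
  case Vnew
  have "wrap_edge (2*k+1) 1 \<in> G_edges k" by (simp add: G_edges_eq)
  with Vnew show ?thesis by (auto simp: wrap_edge_def)
next
  case (Vx i j)
  with assms(2) have ij: "i \<in> {1..2*k+1}" "j \<in> {1,2,3}"
    unfolding G_verts_def H_verts_def by auto
  show ?thesis
  proof (cases "i = 1")
    case True
    have "wrap_edge (2*k+1) j \<in> G_edges k" using ij(2) unfolding G_edges_eq by blast
    moreover have "u \<in> wrap_edge (2*k+1) j" using Vx True by (simp add: wrap_edge_def)
    ultimately show ?thesis by blast
  next
    case False
    with ij(1) have "row_edge i \<in> G_edges k" unfolding G_edges_eq by auto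
    moreover have "u \<in> row_edge i" using Vx ij(2) by (auto simp: row_edge_def)
    ultimately show ?thesis by blast
  qed
qed

theorem mainTheorem18:
  fixes k :: nat
  assumes "k \<ge> 1"
  shows "minimal_uncolorable (G_verts k) (G_edges k)"
proof (rule minimal_uncolorableI)
  show "bihypergraph (G_verts k) (G_edges k)"
    using finite_G_verts G_edge_subset_G_verts card_G_edge[OF assms] by (rule bihypergraph_uniformI)
  show "\<not> colorable (G_verts k) (G_edges k)"
    using assms by (rule not_colorable_G_edges)
qed (use assms G_verts_covered colorable_G_edges_minus in auto)

end
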